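(* Let $N\in\mathbb{N}$ with $N>1$ and $0\le\mu<L<\infty$, and let $(\tau,\{\beta_{i,j}\},\{\lambda_{i,j}\})$ be an optimal solution of problem (Minimax-R) described in the context. Then: (i) for $0\le i<N-1$, if $\lambda_{i,i+1}=0$ then $\beta_{i,j}=0$ for all $j$; (ii) if $\lambda_{N-1,\star}=0$ then $\beta_{N-1,j}=0$ for all $j$; (iii) defining $\alpha_{i,j}=0$ if $\beta_{i,j}=0$, and otherwise $\alpha_{i,j}=\beta_{i,j}/\lambda_{i,i+1}$ for $1\le i<N-1$, $\alpha_{N-1,j}=\beta_{N-1,j}/\lambda_{N-1,\star}$, $\alpha_{N,j}=\beta_{N,j}$, the method generating iterates by $w_k-w_\star=(w_0-w_\star)(1-\frac{\mu}{L}\sum_{i=0}^{k-1}\alpha_{k,i})-\sum_{i=0}^{k-1}\frac{\alpha_{k,i}}{L}\nabla\tilde f(w_i)$, $k=1,\dots,N$, with $\tilde f(x)=f(x)-\frac\mu2\|x-w_\star\|^2$, satisfies $\|w_N-w_\star\|^2\le\tau\|w_0-w_\star\|^2$ for any $d\in\mathbb{N}$, $w_0\in\mathbb{R}^d$, $f\in\mathcal{F}_{\mu,L}(\mathbb{R}^d)$ and $w_\star\in\arg\min f$.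
   Context: $\mathcal{F}_{\mu,L}(\mathbb{R}^d)$ denotes the set of proper closed convex functions $f:\mathbb{R}^d\to\mathbb{R}$ such that for all $x,y$: $f(x)\le f(y)+\langle\nabla f(y);x-y\rangle+\frac L2\|x-y\|^2$ and $f(x)\ge f(y)+\langle\nabla f(y);x-y\rangle+\frac\mu2\|x-y\|^2$. Let $\mathbf{w}_0=e_1\in\mathbb{R}^{N+1}$, $\mathbf{g}_i=e_{i+2}\in\mathbb{R}^{N+1}$, $\mathbf{f}_i=e_{i+1}\in\mathbb{R}^N$ ($i=0,\dots,N-1$). Problem (Minimax-R): variables $\tau\in\mathbb{R}$; $\lambda_{i,i+1}\ge0$ ($i=0,\dots,N-2$), $\lambda_{\star,i}\ge0$ ($i=0,\dots,N-1$), $\lambda_{N-1,\star}\ge0$; $\beta_{i,j}\in\mathbb{R}$ ($1\le i\le N$, $0\le j\le i-1$). Minimize $\tau$ subject to $\begin{pmatrix}S''&\mathbf{w}_N\\\mathbf{w}_N^\top&1\end{pmatrix}\succeq0$ and $\sum_{i=0}^{N-2}\lambda_{i,i+1}(\mathbf{f}_{i+1}-\mathbf{f}_i)+\sum_{i=0}^{N-1}\lambda_{\star,i}\mathbf{f}_i-\lambda_{N-1,\star}\mathbf{f}_{N-1}=0$, where $\mathbf{w}_N=\mathbf{w}_0(1-\frac{\mu}{L}\sum_{i=0}^{N-1}\beta_{N,i})-\sum_{i=0}^{N-1}\frac{\beta_{N,i}}{L}\mathbf{g}_i$ and, writing $\mathrm{sym}(a,b)=\frac12(ab^\top+ba^\top)$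 and empty sums as $0$, $S''=\frac{1}{2(L-\mu)}\big(\lambda_{N-1,\star}\mathbf{g}_{N-1}\mathbf{g}_{N-1}^\top+\sum_{i=0}^{N-1}\lambda_{\star,i}\mathbf{g}_i\mathbf{g}_i^\top+\sum_{i=0}^{N-2}\lambda_{i,i+1}(\mathbf{g}_i-\mathbf{g}_{i+1})(\mathbf{g}_i-\mathbf{g}_{i+1})^\top\big)-\lambda_{\star,0}\mathrm{sym}(\mathbf{g}_0,\mathbf{w}_0)-\sum_{i=1}^{N-2}\big(\lambda_{i,i+1}-\frac{\mu}{L}\sum_{j=0}^{i-1}\beta_{i,j}\big)\mathrm{sym}(\mathbf{g}_i,\mathbf{w}_0)+\sum_{i=1}^{N-2}\sum_{j=0}^{i-1}\frac{\beta_{i,j}}{L}\mathrm{sym}(\mathbf{g}_i,\mathbf{g}_j)-\big(\lambda_{N-1,\star}-\frac{\mu}{L}\sum_{j=0}^{N-2}\beta_{N-1,j}\big)\mathrm{sym}(\mathbf{g}_{N-1},\mathbf{w}_0)+\sum_{j=0}^{N-2}\frac{\beta_{N-1,j}}{L}\mathrm{sym}(\mathbf{g}_{N-1},\mathbf{g}_j)+\sum_{i=0}^{N-2}\big(\lambda_{i,i+1}-\frac{\mu}{L}\sum_{j=0}^{i-1}\beta_{i,j}\big)\mathrm{sym}(\mathbf{g}_{i+1},\mathbf{w}_0)-\sum_{i=0}^{N-2}\sum_{j=0}^{i-1}\frac{\beta_{i,j}}{L}\mathrm{sym}(\mathbf{g}_{i+1},\mathbf{g}_j)+\tau\mathbf{w}_0\mathbf{w}_0^\top$.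 *)

theory Defs
  imports "HOL-Analysis.Analysis"
begin

text \<open>Vectors of R^n are functions nat => real (only indices < n matter);
  matrices are functions nat => nat => real.  Paper's e_k (1-based) is
  index k-1 here: w_0 = e_1 is index 0, g_i = e_{i+2} is index i+1,
  f_i = e_{i+1} (in R^N) is index i.\<close>

definition uvec :: "nat \<Rightarrow> nat \<Rightarrow> real" where
  "uvec k = (\<lambda>j. if j = k then 1 else 0)"

definition wvec0 :: "nat \<Rightarrow> real" where "wvec0 = uvec 0"
definition gvec :: "nat \<Rightarrow> nat \<Rightarrow> real" where "gvec i = uvec (i + 1)"
definition fvec :: "nat \<Rightarrow> nat \<Rightarrow> real" where "fvec i = uvec i"

definition outer :: "(nat \<Rightarrow> real) \<Rightarrow> (nat \<Rightarrow> real) \<Rightarrow> nat \<Rightarrow> nat \<Rightarrow> real" where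
  "outer a b = (\<lambda>p q. a p * b q)"

definition symm :: "(nat \<Rightarrow> real) \<Rightarrow> (nat \<Rightarrow> real) \<Rightarrow> nat \<Rightarrow> nat \<Rightarrow> real" where
  "symm a b = (\<lambda>p q. (a p * b q + b p * a q) / 2)"

definition psd :: "nat \<Rightarrow> (nat \<Rightarrow> nat \<Rightarrow> real) \<Rightarrow> bool" where
  "psd n M \<longleftrightarrow> (\<forall>p<n. \<forall>q<n. M p q = M q p) \<and>
     (\<forall>x :: nat \<Rightarrow> real. 0 \<le> (\<Sum>p<n. \<Sum>q<n. x p * M p q * x q))"

text \<open>Decision variables: tau; lamI i = lambda_{i,i+1} (i = 0..N-2);
  lamS i = lambda_{star,i} (i = 0..N-1); lamNs = lambda_{N-1,star};
  bet i j = beta_{i,j} (1 <= i <= N, 0 <= j <= i-1).\<close>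

definition wNvec :: "nat \<Rightarrow> real \<Rightarrow> real \<Rightarrow> (nat \<Rightarrow> nat \<Rightarrow> real) \<Rightarrow> nat \<Rightarrow> real" where
  "wNvec N \<mu> L bet = (\<lambda>p. wvec0 p * (1 - \<mu> / L * (\<Sum>i<N. bet N i))
                          - (\<Sum>i<N. bet N i / L * gvec i p))"

definition Smat :: "nat \<Rightarrow> real \<Rightarrow> real \<Rightarrow> real \<Rightarrow> (nat \<Rightarrow> real) \<Rightarrow> (nat \<Rightarrow> real) \<Rightarrow> real
     \<Rightarrow> (nat \<Rightarrow> nat \<Rightarrow> real) \<Rightarrow> nat \<Rightarrow> nat \<Rightarrow> real" where
  "Smat N \<mu> L \<tau> lamI lamS lamNs bet = (\<lambda>p q.
      1 / (2 * (L - \<mu>)) *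
        ( lamNs * outer (gvec (N - 1)) (gvec (N - 1)) p q
        + (\<Sum>i<N. lamS i * outer (gvec i) (gvec i) p q)
        + (\<Sum>i<N - 1. lamI i * outer (\<lambda>r. gvec i r - gvec (i + 1) r)
                                        (\<lambda>r. gvec i r - gvec (i + 1) r) p q))
      - lamS 0 * symm (gvec 0) wvec0 p q
      - (\<Sum>i\<in>{1..N - 2}. (lamI i - \<mu> / L * (\<Sum>j<i. bet i j)) * symm (gvec i) wvec0 p q)
      + (\<Sum>i\<in>{1..N - 2}. \<Sum>j<i. bet i j / L * symm (gvec i) (gvec j) p q)
      - (lamNs - \<mu> / L * (\<Sum>j<N - 1. bet (N - 1) j)) * symm (gvec (N - 1)) wvec0 p q
      + (\<Sum>j<N - 1. bet (N - 1) j / L * symm (gvec (N - 1)) (gvec j) p q)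
      + (\<Sum>i<N - 1. (lamI i - \<mu> / L * (\<Sum>j<i. bet i j)) * symm (gvec (i + 1)) wvec0 p q)
      - (\<Sum>i<N - 1. \<Sum>j<i. bet i j / L * symm (gvec (i + 1)) (gvec j) p q)
      + \<tau> * outer wvec0 wvec0 p q)"

definition blockmat :: "nat \<Rightarrow> (nat \<Rightarrow> nat \<Rightarrow> real) \<Rightarrow> (nat \<Rightarrow> real) \<Rightarrow> nat \<Rightarrow> nat \<Rightarrow> real" where
  "blockmat n S v = (\<lambda>p q. if p < n \<and> q < n then S p q
                            else if p < n then v p
                            else if q < n then v q
                            else 1)"

definition minimaxR_feasible ::
  "nat \<Rightarrow> real \<Rightarrow> real \<Rightarrow> real \<Rightarrow> (nat \<Rightarrow> real) \<Rightarrow> (nat \<Rightarrow> real) \<Rightarrow> real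
     \<Rightarrow> (nat \<Rightarrow> nat \<Rightarrow> real) \<Rightarrow> bool" where
  "minimaxR_feasible N \<mu> L \<tau> lamI lamS lamNs bet \<longleftrightarrow>
     (\<forall>i<N - 1. 0 \<le> lamI i) \<and> (\<forall>i<N. 0 \<le> lamS i) \<and> 0 \<le> lamNs \<and>
     psd (N + 2) (blockmat (N + 1) (Smat N \<mu> L \<tau> lamI lamS lamNs bet) (wNvec N \<mu> L bet)) \<and>
     (\<forall>k<N. (\<Sum>i<N - 1. lamI i * (fvec (i + 1) k - fvec i k))
            + (\<Sum>i<N. lamS i * fvec i k) - lamNs * fvec (N - 1) k = 0)"

definition minimaxR_optimal ::
  "nat \<Rightarrow> real \<Rightarrow> real \<Rightarrow> real \<Rightarrow> (nat \<Rightarrow> real) \<Rightarrow> (nat \<Rightarrow> real) \<Rightarrow> real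
     \<Rightarrow> (nat \<Rightarrow> nat \<Rightarrow> real) \<Rightarrow> bool" where
  "minimaxR_optimal N \<mu> L \<tau> lamI lamS lamNs bet \<longleftrightarrow>
     minimaxR_feasible N \<mu> L \<tau> lamI lamS lamNs bet \<and>
     (\<forall>\<tau>' lamI' lamS' lamNs' bet'.
        minimaxR_feasible N \<mu> L \<tau>' lamI' lamS' lamNs' bet' \<longrightarrow> \<tau> \<le> \<tau>')"

definition alpha_coef :: "nat \<Rightarrow> (nat \<Rightarrow> real) \<Rightarrow> real \<Rightarrow> (nat \<Rightarrow> nat \<Rightarrow> real) \<Rightarrow> nat \<Rightarrow> nat \<Rightarrow> real" where
  "alpha_coef N lamI lamNs bet i j =
     (if bet i j = 0 then 0
      else if 1 \<le> i \<and> i < N - 1 then bet i j / lamI i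
      else if i = N - 1 then bet i j / lamNs
      else if i = N then bet i j
      else 0)"

text \<open>f is real-valued everywhere with gradient gf (so proper and, being
  differentiable hence continuous, closed), convex, and satisfies the two
  quadratic bounds.\<close>
definition in_F :: "real \<Rightarrow> real \<Rightarrow> ('a::euclidean_space \<Rightarrow> real) \<Rightarrow> ('a \<Rightarrow> 'a) \<Rightarrow> bool" where
  "in_F \<mu> L f gf \<longleftrightarrow>
     (\<forall>x. (f has_derivative (\<lambda>h. inner (gf x) h)) (at x)) \<and>
     convex_on UNIV f \<and>
     (\<forall>x y. f x \<le> f y + inner (gf y) (x - y) + L / 2 * (norm (x - y))\<^sup>2) \<and>
     (\<forall>x y. f x \<ge> f y + inner (gf y) (x - y) + \<mu> / 2 * (norm (x - y))\<^sup>2)"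

end

theory Submission
  imports Defs
begin

(* All three claims hold at every feasible point of (Minimax-R).

   (i), (ii): the equality constraint says that lambda_{i,i+1} and lambda_{N-1,star} are partial
   sums of the nonnegative lambda_{star,k}.  If one of them vanishes, then so do all multipliers
   up to that index; by induction the earlier rows of beta vanish too, and then the diagonal entry
   of S'' at g_i is 0 while its (g_i, g_j) entry is beta_{i,j} / (2L).  Positive semidefiniteness
   forces the whole row to vanish.

   (iii): the performance-estimation argument.  Pair the certificate matrix with the Gram matrix
   of w_0 - w_star and the gradients of the shifted function at the iterates; the Schur complement
   bounds |w_N - w_star|^2 by this pairing with S''.  By (i) and (ii) the beta-terms of S'' are
   multipliers times iterates, so the pairing is tau |w_0 - w_star|^2 plus the lambda-weighted sum
   of the interpolation inequalities of the (L - mu)-smooth convex shifted function; the function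
   values cancel by the equality constraint, so that sum is nonpositive. *)

section \<open>Quadratic forms on index vectors\<close>

lemma sum_uvec_mult: "(\<Sum>p<n. uvec c p * F p) = (if c < n then F c else 0)"
proof -
  have "uvec c p * F p = (if p = c then F p else 0)" for p
    by (simp add: uvec_def)
  then show ?thesis by simp
qed

lemma quad_form_uvec_pair:
  fixes M :: "nat \<Rightarrow> nat \<Rightarrow> real"
  assumes "a < n" "b < n" "a \<noteq> b"
  shows "(\<Sum>p<n. \<Sum>q<n. (s * uvec a p + t * uvec b p) * M p q * (s * uvec a q + t * uvec b q))
     = s * s * M a a + s * t * (M a b + M b a) + t * t * M b b"
proof -
  have expand: "\<And>p q. (s * uvec a p + t * uvec b p) * M p q * (s * uvec a q + t * uvec b q)
     = s * s * (uvec a p * (uvec a q * M p q)) + s * t * (uvec a p * (uvec b q * M p q))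
       + t * s * (uvec b p * (uvec a q * M p q)) + t * t * (uvec b p * (uvec b q * M p q))"
    by (simp add: algebra_simps)
  show ?thesis
    unfolding expand by (simp add: sum.distrib sum_distrib_left[symmetric] sum_uvec_mult assms algebra_simps)
qed

lemma psd_zero_diag_imp_zero:
  assumes "psd n M" "a < n" "b < n" "M a a = 0"
  shows "M a b = 0"
proof (cases "a = b")
  case True
  then show ?thesis using assms by simp
next
  case False
  have sym: "M b a = M a b" using assms unfolding psd_def by auto
  have nonneg: "0 \<le> 2 * s * M a b + M b b" for s
  proof -
    have "0 \<le> (\<Sum>p<n. \<Sum>q<n. (s * uvec a p + 1 * uvec b p) * M p q * (s * uvec a q + 1 * uvec b q))"
      using assms(1) unfolding psd_def by (rule conjE) (erule allE)
    also have "\<dots> = 2 * s * M a b + M b b"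
      using quad_form_uvec_pair[OF assms(2,3) False, of s 1 M] assms(4) sym by simp
    finally show ?thesis .
  qed
  show ?thesis
    using nonneg[of "- (M b b + 1) / (2 * M a b)"] by (cases "M a b = 0") (auto simp: field_simps)
qed

definition gram_form :: "nat \<Rightarrow> (nat \<Rightarrow> 'a::real_inner) \<Rightarrow> (nat \<Rightarrow> nat \<Rightarrow> real) \<Rightarrow> real" where
  "gram_form n v M = (\<Sum>p<n. \<Sum>q<n. M p q * inner (v p) (v q))"

definition lincomb :: "nat \<Rightarrow> (nat \<Rightarrow> 'a::real_vector) \<Rightarrow> (nat \<Rightarrow> real) \<Rightarrow> 'a" where
  "lincomb n v a = (\<Sum>p<n. a p *\<^sub>R v p)"

lemma gram_form_add: "gram_form n v (\<lambda>p q. A p q + B p q) = gram_form n v A + gram_form n v B"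
  by (simp add: gram_form_def distrib_right sum.distrib)

lemma gram_form_diff: "gram_form n v (\<lambda>p q. A p q - B p q) = gram_form n v A - gram_form n v B"
  by (simp add: gram_form_def left_diff_distrib sum_subtractf)

lemma gram_form_scale: "gram_form n v (\<lambda>p q. c * A p q) = c * gram_form n v A"
  by (simp add: gram_form_def sum_distrib_left mult.assoc)

lemma gram_form_sum: "gram_form n v (\<lambda>p q. \<Sum>i\<in>I. F i p q) = (\<Sum>i\<in>I. gram_form n v (F i))"
  unfolding gram_form_def sum_distrib_right
  by (subst sum.swap, rule sum.cong[OF refl], subst sum.swap, simp)

lemma gram_form_outer: "gram_form n v (outer a b) = inner (lincomb n v a) (lincomb n v b)"
  by (simp add: gram_form_def lincomb_def outer_def inner_sum_left inner_sum_right
      sum_distrib_left mult_ac) (rule sum.swap)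

lemma gram_form_symm: "gram_form n v (symm a b) = inner (lincomb n v a) (lincomb n v b)"
proof -
  have "symm a b = (\<lambda>p q. (1/2) * outer a b p q + (1/2) * outer b a p q)"
    by (auto simp: symm_def outer_def fun_eq_iff field_simps)
  then show ?thesis
    by (simp only: gram_form_add gram_form_scale gram_form_outer) (simp add: inner_commute)
qed

lemma lincomb_diff: "lincomb n v (\<lambda>r. a r - b r) = lincomb n v a - lincomb n v b"
  by (simp add: lincomb_def scaleR_diff_left sum_subtractf)

lemma lincomb_scale_right: "lincomb n v (\<lambda>r. a r * c) = c *\<^sub>R lincomb n v a"
  by (simp add: lincomb_def scaleR_sum_right mult.commute)

lemma lincomb_scale: "lincomb n v (\<lambda>r. c * a r) = c *\<^sub>R lincomb n v a"
  by (simp add: lincomb_def scaleR_sum_right)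

lemma lincomb_sum: "lincomb n v (\<lambda>r. \<Sum>i\<in>I. F i r) = (\<Sum>i\<in>I. lincomb n v (F i))"
  by (simp add: lincomb_def scaleR_sum_left) (rule sum.swap)

lemma lincomb_uvec:
  assumes "k < n"
  shows "lincomb n v (uvec k) = v k"
proof -
  have "uvec k p *\<^sub>R v p = (if p = k then v p else 0)" for p
    by (simp add: uvec_def)
  then show ?thesis
    using assms by (simp add: lincomb_def)
qed

lemma gram_form_nonneg:
  fixes v :: "nat \<Rightarrow> 'a::euclidean_space"
  assumes "psd n M"
  shows "0 \<le> gram_form n v M"
proof -
  have coords: "inner (v p) (v q) = (\<Sum>b\<in>Basis. (v p \<bullet> b) * (v q \<bullet> b))" for p q
    by (rule euclidean_inner)
  have "gram_form n v M = (\<Sum>p<n. \<Sum>q<n. \<Sum>b\<in>Basis. (v p \<bullet> b) * M p q * (v q \<bullet> b))"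
    unfolding gram_form_def coords by (simp add: sum_distrib_left mult_ac)
  also have "\<dots> = (\<Sum>p<n. \<Sum>b\<in>Basis. \<Sum>q<n. (v p \<bullet> b) * M p q * (v q \<bullet> b))"
    by (rule sum.cong[OF refl], rule sum.swap)
  also have "\<dots> = (\<Sum>b\<in>Basis. \<Sum>p<n. \<Sum>q<n. (v p \<bullet> b) * M p q * (v q \<bullet> b))"
    by (rule sum.swap)
  also have "\<dots> \<ge> 0"
  proof (rule sum_nonneg)
    fix b :: 'a
    have "\<forall>x. 0 \<le> (\<Sum>p<n. \<Sum>q<n. x p * M p q * x q)"
      using assms unfolding psd_def by blast
    then show "0 \<le> (\<Sum>p<n. \<Sum>q<n. (v p \<bullet> b) * M p q * (v q \<bullet> b))"
      by (rule allE[where x = "\<lambda>p. v p \<bullet> b"]) simp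
  qed
  finally show ?thesis by simp
qed

lemma gram_form_blockmat:
  fixes v :: "nat \<Rightarrow> 'a::real_inner"
  shows "gram_form (Suc n) (\<lambda>p. if p < n then v p else z) (blockmat n S w)
       = gram_form n v S + 2 * inner (lincomb n v w) z + inner z z"
proof -
  let ?V = "\<lambda>p. if p < n then v p else z"
  have row: "(\<Sum>q<Suc n. blockmat n S w p q * inner (?V p) (?V q))
      = (\<Sum>q<n. S p q * inner (v p) (v q)) + w p * inner (v p) z" if "p < n" for p
  proof -
    have "(\<Sum>q<n. blockmat n S w p q * inner (?V p) (?V q)) = (\<Sum>q<n. S p q * inner (v p) (v q))"
      using that by (intro sum.cong) (auto simp: blockmat_def)
    then show ?thesis
      using that by (simp add: blockmat_def)
  qed
  have last_row: "(\<Sum>q<Suc n. blockmat n S w n q * inner (?V n) (?V q))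
      = (\<Sum>q<n. w q * inner (v q) z) + inner z z"
  proof -
    have "(\<Sum>q<n. blockmat n S w n q * inner (?V n) (?V q)) = (\<Sum>q<n. w q * inner (v q) z)"
      by (intro sum.cong) (auto simp: blockmat_def inner_commute)
    then show ?thesis
      by (simp add: blockmat_def)
  qed
  have "gram_form (Suc n) ?V (blockmat n S w)
      = (\<Sum>p<n. \<Sum>q<Suc n. blockmat n S w p q * inner (?V p) (?V q))
        + (\<Sum>q<Suc n. blockmat n S w n q * inner (?V n) (?V q))"
    unfolding gram_form_def by (rule sum.lessThan_Suc)
  also have "\<dots> = (\<Sum>p<n. (\<Sum>q<n. S p q * inner (v p) (v q)) + w p * inner (v p) z)
        + ((\<Sum>q<n. w q * inner (v q) z) + inner z z)"
    using row last_row by simp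
  also have "\<dots> = gram_form n v S + 2 * inner (lincomb n v w) z + inner z z"
    by (simp add: gram_form_def lincomb_def sum.distrib inner_sum_left)
  finally show ?thesis .
qed

lemma psd_blockmat_gram_bound:
  fixes v :: "nat \<Rightarrow> 'a::euclidean_space"
  assumes "psd (Suc n) (blockmat n S w)"
  shows "inner (lincomb n v w) (lincomb n v w) \<le> gram_form n v S"
proof -
  let ?z = "- lincomb n v w"
  have "0 \<le> gram_form (Suc n) (\<lambda>p. if p < n then v p else ?z) (blockmat n S w)"
    using assms by (rule gram_form_nonneg)
  then show ?thesis
    by (simp add: gram_form_blockmat)
qed

section \<open>The equality constraint\<close>

(* Its k-th component reads lambda_{k-1,k} - lambda_{k,k+1} + lambda_{star,k} = [k = N-1] lambda_{N-1,star},
   with absent terms read as 0. *)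
definition multiplier_balance :: "nat \<Rightarrow> (nat \<Rightarrow> real) \<Rightarrow> (nat \<Rightarrow> real) \<Rightarrow> real \<Rightarrow> bool" where
  "multiplier_balance N lamI lamS lamNs \<longleftrightarrow>
     (\<forall>k<N. (\<Sum>i<N - 1. lamI i * (fvec (i + 1) k - fvec i k))
            + (\<Sum>i<N. lamS i * fvec i k) - lamNs * fvec (N - 1) k = 0)"

lemma minimaxR_feasibleD:
  assumes "minimaxR_feasible N \<mu> L \<tau> lamI lamS lamNs bet"
  shows "\<forall>i<N - 1. 0 \<le> lamI i" and "\<forall>i<N. 0 \<le> lamS i" and "0 \<le> lamNs"
    and "psd (Suc (N + 1)) (blockmat (N + 1) (Smat N \<mu> L \<tau> lamI lamS lamNs bet) (wNvec N \<mu> L bet))"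
    and "multiplier_balance N lamI lamS lamNs"
  using assms unfolding minimaxR_feasible_def multiplier_balance_def by auto

lemma multiplier_balance_sum:
  fixes y :: "nat \<Rightarrow> real"
  assumes bal: "multiplier_balance N lamI lamS lamNs" and N: "1 < N"
  shows "(\<Sum>i<N - 1. lamI i * (y (Suc i) - y i)) + (\<Sum>i<N. lamS i * y i) - lamNs * y (N - 1) = 0"
proof -
  have pick: "(\<Sum>k<N. y k * fvec m k) = y m" if "m < N" for m
    using that sum_uvec_mult[where c = m and n = N and F = y] by (simp add: fvec_def mult.commute)
  have lamI_part: "(\<Sum>k<N. y k * (\<Sum>i<N - 1. lamI i * (fvec (i + 1) k - fvec i k)))
      = (\<Sum>i<N - 1. lamI i * ((\<Sum>k<N. y k * fvec (i + 1) k) - (\<Sum>k<N. y k * fvec i k)))"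
  proof -
    have "(\<Sum>k<N. y k * (\<Sum>i<N - 1. lamI i * (fvec (i + 1) k - fvec i k)))
        = (\<Sum>k<N. \<Sum>i<N - 1. lamI i * (y k * fvec (i + 1) k - y k * fvec i k))"
      by (simp add: sum_distrib_left algebra_simps)
    also have "\<dots> = (\<Sum>i<N - 1. \<Sum>k<N. lamI i * (y k * fvec (i + 1) k - y k * fvec i k))"
      by (rule sum.swap)
    also have "\<dots> = (\<Sum>i<N - 1. lamI i * ((\<Sum>k<N. y k * fvec (i + 1) k) - (\<Sum>k<N. y k * fvec i k)))"
      by (simp add: sum_distrib_left[symmetric] sum_subtractf[symmetric])
    finally show ?thesis .
  qed
  have lamS_part: "(\<Sum>k<N. y k * (\<Sum>i<N. lamS i * fvec i k)) = (\<Sum>i<N. lamS i * (\<Sum>k<N. y k * fvec i k))"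
  proof -
    have "(\<Sum>k<N. y k * (\<Sum>i<N. lamS i * fvec i k)) = (\<Sum>k<N. \<Sum>i<N. lamS i * (y k * fvec i k))"
      by (simp add: sum_distrib_left algebra_simps)
    also have "\<dots> = (\<Sum>i<N. \<Sum>k<N. lamS i * (y k * fvec i k))"
      by (rule sum.swap)
    finally show ?thesis
      by (simp add: sum_distrib_left)
  qed
  have "0 = (\<Sum>k<N. y k * ((\<Sum>i<N - 1. lamI i * (fvec (i + 1) k - fvec i k))
            + (\<Sum>i<N. lamS i * fvec i k) - lamNs * fvec (N - 1) k))"
    using bal unfolding multiplier_balance_def by simp
  also have "\<dots> = (\<Sum>k<N. y k * (\<Sum>i<N - 1. lamI i * (fvec (i + 1) k - fvec i k)))
     + (\<Sum>k<N. y k * (\<Sum>i<N. lamS i * fvec i k)) - lamNs * (\<Sum>k<N. y k * fvec (N - 1) k)"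
    by (simp add: distrib_left right_diff_distrib sum.distrib sum_subtractf sum_distrib_left[of lamNs] mult.left_commute)
  also have "\<dots> = (\<Sum>i<N - 1. lamI i * (y (Suc i) - y i)) + (\<Sum>i<N. lamS i * y i) - lamNs * y (N - 1)"
    unfolding lamI_part lamS_part using N by (simp add: pick)
  finally show ?thesis by simp
qed

lemma multiplier_balance_lamI:
  assumes "multiplier_balance N lamI lamS lamNs" and "1 < N" and m: "m < N - 1"
  shows "lamI m = (\<Sum>i\<le>m. lamS i)"
proof -
  let ?y = "\<lambda>i. if i \<le> m then 1 else (0::real)"
  have "(\<Sum>i<N - 1. lamI i * (?y (Suc i) - ?y i)) = (\<Sum>i<N - 1. if i = m then - lamI m else 0)"
    by (rule sum.cong) auto
  also have "\<dots> = - lamI m"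
    using m by simp
  finally have lamI_part: "(\<Sum>i<N - 1. lamI i * (?y (Suc i) - ?y i)) = - lamI m" .
  have "(\<Sum>i<N. lamS i * ?y i) = (\<Sum>i<N. if i \<in> {..m} then lamS i else 0)"
    by (rule sum.cong) auto
  also have "\<dots> = (\<Sum>i\<in>{..<N} \<inter> {..m}. lamS i)"
    by (simp add: sum.inter_restrict)
  also have "{..<N} \<inter> {..m} = {..m}"
    using m by auto
  finally have lamS_part: "(\<Sum>i<N. lamS i * ?y i) = (\<Sum>i\<le>m. lamS i)" .
  show ?thesis
    using multiplier_balance_sum[OF assms(1,2), of ?y] lamI_part lamS_part m by simp
qed

lemma multiplier_balance_lamNs:
  assumes "multiplier_balance N lamI lamS lamNs" and "1 < N"
  shows "lamNs = (\<Sum>i<N. lamS i)"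
  using multiplier_balance_sum[OF assms, of "\<lambda>_. 1"] by simp

lemma multiplier_balance_lamI_eq_0:
  assumes bal: "multiplier_balance N lamI lamS lamNs" and N: "1 < N"
    and nonneg: "\<forall>i<N. 0 \<le> lamS i" and m: "m < N - 1" "lamI m = 0" and k: "k \<le> m"
  shows "lamS k = 0" and "lamI k = 0"
proof -
  have "(\<Sum>i\<le>m. lamS i) = 0"
    using multiplier_balance_lamI[OF bal N m(1)] m(2) by simp
  then have lamS0: "\<forall>i\<le>m. lamS i = 0"
    using nonneg m(1) by (subst (asm) sum_nonneg_eq_0_iff) auto
  then show "lamS k = 0"
    using k by simp
  have "lamI k = (\<Sum>i\<le>k. lamS i)"
    using multiplier_balance_lamI[OF bal N] k m(1) by simp
  also have "\<dots> = 0"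
    using lamS0 k by (intro sum.neutral) auto
  finally show "lamI k = 0" .
qed

lemma multiplier_balance_lamNs_eq_0:
  assumes bal: "multiplier_balance N lamI lamS lamNs" and N: "1 < N"
    and nonneg: "\<forall>i<N. 0 \<le> lamS i" and "lamNs = 0"
  shows "k < N \<Longrightarrow> lamS k = 0" and "k < N - 1 \<Longrightarrow> lamI k = 0"
proof -
  have "(\<Sum>i<N. lamS i) = 0"
    using multiplier_balance_lamNs[OF bal N] assms(4) by simp
  then have lamS0: "\<forall>i<N. lamS i = 0"
    using nonneg by (subst (asm) sum_nonneg_eq_0_iff) auto
  then show "k < N \<Longrightarrow> lamS k = 0"
    by simp
  assume k: "k < N - 1"
  have "lamI k = (\<Sum>i\<le>k. lamS i)"
    using multiplier_balance_lamI[OF bal N k] .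
  also have "\<dots> = 0"
    using lamS0 k by (intro sum.neutral) auto
  finally show "lamI k = 0" .
qed

section \<open>Rows of the step sizes with vanishing multipliers\<close>

lemma sum_eq_single_term:
  fixes f :: "'b \<Rightarrow> 'a::comm_monoid_add"
  assumes "finite A" "j \<in> A" "\<forall>l\<in>A. l \<noteq> j \<longrightarrow> f l = 0"
  shows "(\<Sum>l\<in>A. f l) = f j"
  using assms by (simp add: sum.remove)

lemma Smat_entries_vanishing_multipliers:
  assumes N: "1 < N" and ji: "j < i" and iN: "i < N"
    and lamI0: "\<forall>k\<le>i. k < N - 1 \<longrightarrow> lamI k = 0"
    and lamS0: "\<forall>k\<le>i. lamS k = 0"
    and lamNs0: "i = N - 1 \<longrightarrow> lamNs = 0"
    and bet0: "\<forall>l<i - 1. bet (i - 1) l = 0"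
  shows "Smat N \<mu> L \<tau> lamI lamS lamNs bet (i + 1) (i + 1) = 0"
    and "Smat N \<mu> L \<tau> lamI lamS lamNs bet (i + 1) (j + 1) = bet i j / (2 * L)"
proof -
  let ?a = "i + 1" and ?b = "j + 1"
  have w0: "wvec0 ?a = 0" "wvec0 ?b = 0"
    by (auto simp: wvec0_def uvec_def)
  have outer_w0: "outer wvec0 wvec0 (Suc i) q = 0" for q
    using w0 by (simp add: outer_def)
  have symm_w0: "symm g wvec0 p q = 0" if "p \<in> {?a, ?b}" "q \<in> {?a, ?b}" for g p q
    using that w0 by (auto simp: symm_def)
  have quad1: "lamNs * outer (gvec (N - 1)) (gvec (N - 1)) p q = 0" if "p \<in> {?a, ?b}" "q \<in> {?a, ?b}" for p q
    using that lamNs0 ji iN by (auto simp: outer_def gvec_def uvec_def)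
  have quad2: "(\<Sum>k<N. lamS k * outer (gvec k) (gvec k) p q) = 0" if "p \<in> {?a, ?b}" "q \<in> {?a, ?b}" for p q
    using that lamS0 ji by (intro sum.neutral) (auto simp: outer_def gvec_def uvec_def)
  have quad3: "(\<Sum>k<N - 1. lamI k * outer (\<lambda>r. gvec k r - gvec (k + 1) r) (\<lambda>r. gvec k r - gvec (k + 1) r) p q) = 0"
    if "p \<in> {?a, ?b}" "q \<in> {?a, ?b}" for p q
    using that lamI0 ji by (intro sum.neutral) (auto simp: outer_def gvec_def uvec_def)
  have diag: "(\<Sum>k\<in>{1..N - 2}. \<Sum>l<k. bet k l / L * symm (gvec k) (gvec l) ?a ?a) = 0"
    "(\<Sum>l<N - 1. bet (N - 1) l / L * symm (gvec (N - 1)) (gvec l) ?a ?a) = 0"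
    "(\<Sum>k<N - 1. \<Sum>l<k. bet k l / L * symm (gvec (k + 1)) (gvec l) ?a ?a) = 0"
    by (auto intro!: sum.neutral simp: symm_def gvec_def uvec_def)
  have shifted_row: "(\<Sum>k<N - 1. \<Sum>l<k. bet k l / L * symm (gvec (k + 1)) (gvec l) ?a ?b) = 0"
    using bet0 ji by (intro sum.neutral ballI) (auto simp: symm_def gvec_def uvec_def)
  have own_row: "(\<Sum>k\<in>{1..N - 2}. \<Sum>l<k. bet k l / L * symm (gvec k) (gvec l) ?a ?b)
     + (\<Sum>l<N - 1. bet (N - 1) l / L * symm (gvec (N - 1)) (gvec l) ?a ?b) = bet i j / (2 * L)"
  proof (cases "i = N - 1")
    case True
    have "(\<Sum>k\<in>{1..N - 2}. \<Sum>l<k. bet k l / L * symm (gvec k) (gvec l) ?a ?b) = 0"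
      using True ji by (intro sum.neutral ballI) (auto simp: symm_def gvec_def uvec_def)
    moreover have "(\<Sum>l<N - 1. bet (N - 1) l / L * symm (gvec (N - 1)) (gvec l) ?a ?b) = bet i j / (2 * L)"
      using True ji by (subst sum_eq_single_term[where j = j]) (auto simp: symm_def gvec_def uvec_def)
    ultimately show ?thesis by simp
  next
    case False
    have "(\<Sum>l<N - 1. bet (N - 1) l / L * symm (gvec (N - 1)) (gvec l) ?a ?b) = 0"
      using False ji iN by (intro sum.neutral ballI) (auto simp: symm_def gvec_def uvec_def)
    moreover have "(\<Sum>k\<in>{1..N - 2}. \<Sum>l<k. bet k l / L * symm (gvec k) (gvec l) ?a ?b)
        = (\<Sum>l<i. bet i l / L * symm (gvec i) (gvec l) ?a ?b)"
      using False ji iN by (intro sum_eq_single_term) (auto intro!: sum.neutral simp: symm_def gvec_def uvec_def)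
    moreover have "\<dots> = bet i j / (2 * L)"
      using ji by (subst sum_eq_single_term[where j = j]) (auto simp: symm_def gvec_def uvec_def)
    ultimately show ?thesis by simp
  qed
  show "Smat N \<mu> L \<tau> lamI lamS lamNs bet ?a ?a = 0"
    unfolding Smat_def using quad1[of ?a ?a] quad2[of ?a ?a] quad3[of ?a ?a] symm_w0[of ?a ?a] diag
    by (auto simp: outer_w0)
  show "Smat N \<mu> L \<tau> lamI lamS lamNs bet ?a ?b = bet i j / (2 * L)"
    unfolding Smat_def using quad1[of ?a ?b] quad2[of ?a ?b] quad3[of ?a ?b] symm_w0[of ?a ?b] own_row shifted_row
    by (auto simp: outer_w0)
qed

lemma minimaxR_feasible_bet_row_eq_0:
  assumes feas: "minimaxR_feasible N \<mu> L \<tau> lamI lamS lamNs bet" and N: "1 < N" and L: "L \<noteq> 0"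
    and ji: "j < i" and iN: "i < N"
    and "\<forall>k\<le>i. k < N - 1 \<longrightarrow> lamI k = 0" and "\<forall>k\<le>i. lamS k = 0" and "i = N - 1 \<longrightarrow> lamNs = 0"
    and "\<forall>l<i - 1. bet (i - 1) l = 0"
  shows "bet i j = 0"
proof -
  let ?S = "Smat N \<mu> L \<tau> lamI lamS lamNs bet"
  let ?B = "blockmat (N + 1) ?S (wNvec N \<mu> L bet)"
  have "?S (i + 1) (i + 1) = 0"
    using N ji iN assms(6-9) by (rule Smat_entries_vanishing_multipliers(1))
  moreover have "?S (i + 1) (j + 1) = bet i j / (2 * L)"
    using N ji iN assms(6-9) by (rule Smat_entries_vanishing_multipliers(2))
  ultimately have "?B (i + 1) (i + 1) = 0" and B_ij: "?B (i + 1) (j + 1) = bet i j / (2 * L)"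
    using ji iN by (simp_all add: blockmat_def)
  then have "?B (i + 1) (j + 1) = 0"
    using psd_zero_diag_imp_zero[OF minimaxR_feasibleD(4)[OF feas], of "i + 1" "j + 1"] ji iN by simp
  then show ?thesis
    using B_ij L by simp
qed

lemma minimaxR_feasible_lamI_eq_0_imp_bet_eq_0:
  assumes feas: "minimaxR_feasible N \<mu> L \<tau> lamI lamS lamNs bet" and N: "1 < N" and L: "L \<noteq> 0"
  shows "i < N - 1 \<Longrightarrow> lamI i = 0 \<Longrightarrow> j < i \<Longrightarrow> bet i j = 0"
proof (induction i arbitrary: j)
  case 0
  then show ?case by simp
next
  case (Suc i)
  note bal = minimaxR_feasibleD(5)[OF feas] and nonneg = minimaxR_feasibleD(2)[OF feas]
  have lam0: "lamS k = 0" "lamI k = 0" if "k \<le> Suc i" for k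
    using multiplier_balance_lamI_eq_0[OF bal N nonneg Suc.prems(1,2) that] by simp_all
  moreover have "bet i l = 0" if "l < i" for l
    using Suc.IH[OF _ _ that] Suc.prems(1) lam0(2)[of i] by simp
  ultimately show ?case
    using Suc.prems by (intro minimaxR_feasible_bet_row_eq_0[OF feas N L]) auto
qed

lemma minimaxR_feasible_lamNs_eq_0_imp_bet_eq_0:
  assumes feas: "minimaxR_feasible N \<mu> L \<tau> lamI lamS lamNs bet" and N: "1 < N" and L: "L \<noteq> 0"
    and lamNs: "lamNs = 0" and j: "j < N - 1"
  shows "bet (N - 1) j = 0"
proof -
  note bal = minimaxR_feasibleD(5)[OF feas] and nonneg = minimaxR_feasibleD(2)[OF feas]
  have lamS0: "k < N \<Longrightarrow> lamS k = 0" and lamI0: "k < N - 1 \<Longrightarrow> lamI k = 0" for k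
    using multiplier_balance_lamNs_eq_0[OF bal N nonneg lamNs] by simp_all
  have "bet (N - 1 - 1) l = 0" if "l < N - 1 - 1" for l
    using N that lamI0[of "N - 1 - 1"] by (intro minimaxR_feasible_lamI_eq_0_imp_bet_eq_0[OF feas N L]) auto
  then show ?thesis
    using N j lamS0 lamI0 lamNs by (intro minimaxR_feasible_bet_row_eq_0[OF feas N L]) auto
qed

section \<open>Interpolation inequalities\<close>

lemma smooth_convex_interpolation:
  fixes h :: "'a::real_inner \<Rightarrow> real" and G :: "'a \<Rightarrow> 'a"
  assumes M: "0 < M"
    and lower: "\<And>x y. h y + inner (G y) (x - y) \<le> h x"
    and upper: "\<And>x y. h x \<le> h y + inner (G y) (x - y) + M / 2 * (norm (x - y))\<^sup>2"
  shows "h y + inner (G y) (x - y) + (norm (G x - G y))\<^sup>2 / (2 * M) \<le> h x"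
proof -
  define d where "d = G x - G y"
  define z where "z = x - (1 / M) *\<^sub>R d"
  have "h y + inner (G y) (z - y) \<le> h z"
    by (rule lower)
  also have "\<dots> \<le> h x + inner (G x) (z - x) + M / 2 * (norm (z - x))\<^sup>2"
    by (rule upper)
  finally have at_z: "h y + inner (G y) (z - y) \<le> h x + inner (G x) (z - x) + M / 2 * (norm (z - x))\<^sup>2" .
  have "inner (G y) (z - y) = inner (G y) (x - y) - inner (G y) d / M"
    and "inner (G x) (z - x) = - (inner (G x) d / M)"
    by (simp_all add: z_def inner_diff_right algebra_simps)
  moreover have "M / 2 * (norm (z - x))\<^sup>2 = (norm d)\<^sup>2 / (2 * M)"
    using M by (simp add: z_def power_divide power2_eq_square field_simps)
  moreover have "inner (G x) d / M - inner (G y) d / M = (norm d)\<^sup>2 / M"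
    by (simp add: d_def power2_norm_eq_inner inner_diff_left diff_divide_distrib[symmetric])
  moreover have "(norm d)\<^sup>2 / M - (norm d)\<^sup>2 / (2 * M) = (norm d)\<^sup>2 / (2 * M)"
    using M by (simp add: field_simps)
  ultimately show ?thesis
    using at_z unfolding d_def by linarith
qed

lemma in_F_boundsD:
  assumes "in_F \<mu> L f gf"
  shows "f y + inner (gf y) (x - y) + \<mu> / 2 * (norm (x - y))\<^sup>2 \<le> f x"
    and "f x \<le> f y + inner (gf y) (x - y) + L / 2 * (norm (x - y))\<^sup>2"
  using assms unfolding in_F_def by blast+

lemma in_F_shift:
  assumes F: "in_F \<mu> L f gf"
    and h: "\<And>x. h x = f x - \<mu> / 2 * (norm (x - ws))\<^sup>2"
    and G: "\<And>x. G x = gf x - \<mu> *\<^sub>R (x - ws)"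
  shows "h y + inner (G y) (x - y) \<le> h x"
    and "h x \<le> h y + inner (G y) (x - y) + (L - \<mu>) / 2 * (norm (x - y))\<^sup>2"
proof -
  have sq: "(norm (x - ws))\<^sup>2 = (norm (x - y))\<^sup>2 + (norm (y - ws))\<^sup>2 + 2 * inner (y - ws) (x - y)"
    by (simp add: power2_norm_eq_inner inner_diff_left inner_diff_right inner_commute algebra_simps)
  have "\<mu> / 2 * (norm (x - ws))\<^sup>2
      = \<mu> / 2 * (norm (x - y))\<^sup>2 + \<mu> / 2 * (norm (y - ws))\<^sup>2 + \<mu> * inner (y - ws) (x - y)"
    by (subst sq) (simp add: field_simps)
  moreover have "h y + inner (G y) (x - y)
      = f y + inner (gf y) (x - y) - \<mu> / 2 * (norm (y - ws))\<^sup>2 - \<mu> * inner (y - ws) (x - y)"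
    by (simp add: h G inner_diff_left[of "gf y"])
  moreover have "f y + inner (gf y) (x - y) + \<mu> / 2 * (norm (x - y))\<^sup>2 \<le> f x"
    and "f x \<le> f y + inner (gf y) (x - y) + L / 2 * (norm (x - y))\<^sup>2"
    by (rule in_F_boundsD[OF F])+
  moreover have "(L - \<mu>) / 2 * (norm (x - y))\<^sup>2 = L / 2 * (norm (x - y))\<^sup>2 - \<mu> / 2 * (norm (x - y))\<^sup>2"
    by (simp add: left_diff_distrib diff_divide_distrib)
  ultimately show "h y + inner (G y) (x - y) \<le> h x"
    and "h x \<le> h y + inner (G y) (x - y) + (L - \<mu>) / 2 * (norm (x - y))\<^sup>2"
    unfolding h by linarith+
qed

lemma in_F_shift_interpolation:
  assumes F: "in_F \<mu> L f gf" and \<mu>: "\<mu> < L"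
    and h: "\<And>x. h x = f x - \<mu> / 2 * (norm (x - ws))\<^sup>2"
    and G: "\<And>x. G x = gf x - \<mu> *\<^sub>R (x - ws)"
  shows "h y + inner (G y) (x - y) + 1 / (2 * (L - \<mu>)) * inner (G x - G y) (G x - G y) \<le> h x"
  using smooth_convex_interpolation[of "L - \<mu>" h G, OF _ in_F_shift[OF F h G]] \<mu>
  by (simp add: power2_norm_eq_inner)

lemma in_F_minimizer_gradient:
  fixes f :: "'a::euclidean_space \<Rightarrow> real"
  assumes F: "in_F \<mu> L f gf" and L: "0 < L" and min: "\<forall>x. f ws \<le> f x"
  shows "gf ws = 0"
proof -
  let ?g = "gf ws"
  have "f ws \<le> f (ws - (1 / L) *\<^sub>R ?g)"
    using min by blast
  also have "\<dots> \<le> f ws + inner ?g ((ws - (1 / L) *\<^sub>R ?g) - ws) + L / 2 * (norm ((ws - (1 / L) *\<^sub>R ?g) - ws))\<^sup>2"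
    by (rule in_F_boundsD(2)[OF F])
  also have "\<dots> = f ws - (norm ?g)\<^sup>2 / (2 * L)"
    using L by (simp add: power2_norm_eq_inner[symmetric] power_divide power2_eq_square field_simps)
  finally have "(norm ?g)\<^sup>2 \<le> 0"
    using L by (simp add: divide_le_0_iff)
  then show ?thesis by simp
qed

section \<open>The performance estimate\<close>

text \<open>With \<open>v 0 = w\<^sub>0 - w\<^sub>\<star>\<close> and \<open>v (Suc j)\<close> the shifted gradient at \<open>w\<^sub>j\<close>, the method
  has \<open>w\<^sub>k - w\<^sub>\<star> = scaled_iterate \<mu> L 1 (\<alpha> k) k v\<close>, while the rows of \<open>S''\<close> contain
  \<open>scaled_iterate \<mu> L \<lambda> (\<beta> i) i v\<close>.\<close>

definition scaled_iterate :: "real \<Rightarrow> real \<Rightarrow> real \<Rightarrow> (nat \<Rightarrow> real) \<Rightarrow> nat \<Rightarrow> (nat \<Rightarrow> 'a::real_vector) \<Rightarrow> 'a" where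
  "scaled_iterate \<mu> L c b k v = (c - \<mu> / L * (\<Sum>j<k. b j)) *\<^sub>R v 0 - (\<Sum>j<k. (b j / L) *\<^sub>R v (Suc j))"

lemma scaled_iterate_scale:
  assumes "\<forall>j<k. c * a j = b j"
  shows "c *\<^sub>R scaled_iterate \<mu> L 1 a k v = scaled_iterate \<mu> L c b k v"
proof -
  have "(\<Sum>j<k. b j) = c * (\<Sum>j<k. a j)" and "(\<Sum>j<k. (b j / L) *\<^sub>R v (Suc j)) = c *\<^sub>R (\<Sum>j<k. (a j / L) *\<^sub>R v (Suc j))"
    using assms by (simp_all add: sum_distrib_left scaleR_sum_right)
  then show ?thesis
    by (simp add: scaled_iterate_def scaleR_diff_right algebra_simps)
qed

lemma scaled_iterate_0: "scaled_iterate \<mu> L c b 0 v = c *\<^sub>R v 0"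
  by (simp add: scaled_iterate_def)

lemma inner_scaled_iterate:
  "inner u (scaled_iterate \<mu> L c b k v)
     = (c - \<mu> / L * (\<Sum>j<k. b j)) * inner u (v 0) - (\<Sum>j<k. b j / L * inner u (v (Suc j)))"
  by (simp add: scaled_iterate_def inner_diff_right inner_sum_right)

lemma lincomb_wNvec: "lincomb (N + 1) v (wNvec N \<mu> L bet) = scaled_iterate \<mu> L 1 (bet N) N v"
proof -
  have "lincomb (Suc N) v (gvec i) = v (Suc i)" if "i < N" for i
    using that by (simp add: gvec_def lincomb_uvec)
  moreover have "lincomb (Suc N) v wvec0 = v 0"
    by (simp add: wvec0_def lincomb_uvec)
  ultimately show ?thesis
    unfolding wNvec_def scaled_iterate_def
    by (simp only: lincomb_diff lincomb_scale_right lincomb_sum lincomb_scale) simp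
qed

lemma gram_form_Smat_expand:
  assumes N: "1 < N"
  shows "gram_form (N + 1) v (Smat N \<mu> L \<tau> lamI lamS lamNs bet) =
     1 / (2 * (L - \<mu>)) * (lamNs * inner (v N) (v N) + (\<Sum>i<N. lamS i * inner (v (Suc i)) (v (Suc i)))
        + (\<Sum>i<N - 1. lamI i * inner (v (Suc i) - v (Suc (Suc i))) (v (Suc i) - v (Suc (Suc i)))))
     - lamS 0 * inner (v 1) (v 0)
     - (\<Sum>i\<in>{1..N - 2}. (lamI i - \<mu> / L * (\<Sum>j<i. bet i j)) * inner (v (Suc i)) (v 0))
     + (\<Sum>i\<in>{1..N - 2}. \<Sum>j<i. bet i j / L * inner (v (Suc i)) (v (Suc j)))
     - (lamNs - \<mu> / L * (\<Sum>j<N - 1. bet (N - 1) j)) * inner (v N) (v 0)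
     + (\<Sum>j<N - 1. bet (N - 1) j / L * inner (v N) (v (Suc j)))
     + (\<Sum>i<N - 1. (lamI i - \<mu> / L * (\<Sum>j<i. bet i j)) * inner (v (Suc (Suc i))) (v 0))
     - (\<Sum>i<N - 1. \<Sum>j<i. bet i j / L * inner (v (Suc (Suc i))) (v (Suc j)))
     + \<tau> * inner (v 0) (v 0)"
proof -
  have g: "lincomb (Suc N) v (gvec i) = v (Suc i)" if "i < N" for i
    using that by (simp add: gvec_def lincomb_uvec)
  have w: "lincomb (Suc N) v wvec0 = v 0"
    by (simp add: wvec0_def lincomb_uvec)
  have NN: "Suc (N - 1) = N"
    using N by simp
  have below: "i \<le> N - 2 \<longleftrightarrow> i + 2 \<le> N" for i
    \<comment> \<open>lets the simplifier bound the indices of the sums over \<open>{1..N - 2}\<close>\<close>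
    using N by arith
  show ?thesis
    unfolding Smat_def
    by (simp only: gram_form_add gram_form_diff gram_form_scale gram_form_sum gram_form_outer
        gram_form_symm lincomb_diff) (use N in \<open>simp add: g w NN below cong: sum.cong_simp\<close>)
qed

lemma gram_form_Smat:
  assumes N: "1 < N" and bal: "multiplier_balance N lamI lamS lamNs"
  shows "gram_form (N + 1) v (Smat N \<mu> L \<tau> lamI lamS lamNs bet) =
     1 / (2 * (L - \<mu>)) * (lamNs * inner (v N) (v N) + (\<Sum>i<N. lamS i * inner (v (Suc i)) (v (Suc i)))
        + (\<Sum>i<N - 1. lamI i * inner (v (Suc i) - v (Suc (Suc i))) (v (Suc i) - v (Suc (Suc i)))))
     + (\<Sum>i<N - 1. inner (v (Suc (Suc i)) - v (Suc i)) (scaled_iterate \<mu> L (lamI i) (bet i) i v))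
     - inner (v N) (scaled_iterate \<mu> L lamNs (bet (N - 1)) (N - 1) v)
     + \<tau> * inner (v 0) (v 0)"
proof -
  have "lamS 0 = lamI 0"
    using multiplier_balance_lamI[OF bal N, of 0] N by simp
  moreover have "{..<N - 1} = insert 0 {1..N - 2}"
    using N by auto
  ultimately have "(\<Sum>i<N - 1. inner (v (Suc i)) (scaled_iterate \<mu> L (lamI i) (bet i) i v))
      = lamS 0 * inner (v 1) (v 0)
        + (\<Sum>i\<in>{1..N - 2}. inner (v (Suc i)) (scaled_iterate \<mu> L (lamI i) (bet i) i v))"
    by (simp add: scaled_iterate_0)
  moreover have "(\<Sum>i<N - 1. inner (v (Suc (Suc i)) - v (Suc i)) (scaled_iterate \<mu> L (lamI i) (bet i) i v))
      = (\<Sum>i<N - 1. inner (v (Suc (Suc i))) (scaled_iterate \<mu> L (lamI i) (bet i) i v))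
        - (\<Sum>i<N - 1. inner (v (Suc i)) (scaled_iterate \<mu> L (lamI i) (bet i) i v))"
    by (simp add: inner_diff_left sum_subtractf)
  moreover have "(\<Sum>i\<in>{1..N - 2}. inner (v (Suc i)) (scaled_iterate \<mu> L (lamI i) (bet i) i v))
      = (\<Sum>i\<in>{1..N - 2}. (lamI i - \<mu> / L * (\<Sum>j<i. bet i j)) * inner (v (Suc i)) (v 0))
        - (\<Sum>i\<in>{1..N - 2}. \<Sum>j<i. bet i j / L * inner (v (Suc i)) (v (Suc j)))"
    and "(\<Sum>i<N - 1. inner (v (Suc (Suc i))) (scaled_iterate \<mu> L (lamI i) (bet i) i v))
      = (\<Sum>i<N - 1. (lamI i - \<mu> / L * (\<Sum>j<i. bet i j)) * inner (v (Suc (Suc i))) (v 0))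
        - (\<Sum>i<N - 1. \<Sum>j<i. bet i j / L * inner (v (Suc (Suc i))) (v (Suc j)))"
    by (simp_all only: inner_scaled_iterate sum_subtractf)
  moreover note inner_scaled_iterate[of "v N" \<mu> L lamNs "bet (N - 1)" "N - 1" v]
  ultimately show ?thesis
    unfolding gram_form_Smat_expand[OF N] by linarith
qed

lemma interpolation_weighted_sum_le:
  fixes h :: "'a::real_inner \<Rightarrow> real" and G :: "'a \<Rightarrow> 'a" and w :: "nat \<Rightarrow> 'a"
  assumes N: "1 < N" and bal: "multiplier_balance N lamI lamS lamNs"
    and nonneg: "\<forall>i<N - 1. 0 \<le> lamI i" "\<forall>i<N. 0 \<le> lamS i" "0 \<le> lamNs"
    and interp: "\<And>x y. h y + inner (G y) (x - y) + K * inner (G x - G y) (G x - G y) \<le> h x"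
    and G_ws: "G ws = 0"
  shows "K * (lamNs * inner (G (w (N - 1))) (G (w (N - 1))) + (\<Sum>i<N. lamS i * inner (G (w i)) (G (w i)))
           + (\<Sum>i<N - 1. lamI i * inner (G (w i) - G (w (Suc i))) (G (w i) - G (w (Suc i)))))
         + (\<Sum>i<N - 1. lamI i * inner (G (w (Suc i)) - G (w i)) (w i - ws))
         - lamNs * inner (G (w (N - 1))) (w (N - 1) - ws) \<le> 0"
proof -
  define g where "g i = G (w i)" for i
  define x where "x i = w i - ws" for i
  define y where "y i = inner (g i) (x i)" for i
  define q where "q i = inner (g i - g (Suc i)) (g i - g (Suc i))" for i
  let ?A = "\<lambda>i. lamI i * (h (w (Suc i)) - h (w i) + inner (g (Suc i) - g i) (x i) - (y (Suc i) - y i) + K * q i)"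
  let ?B = "\<lambda>i. lamS i * (h (w i) - h ws - y i + K * inner (g i) (g i))"
  let ?C = "lamNs * (h ws - h (w (N - 1)) + K * inner (g (N - 1)) (g (N - 1)))"
  have "?A i \<le> 0" if "i < N - 1" for i
    using interp[where x = "w i" and y = "w (Suc i)"] nonneg(1) that
    by (intro mult_nonneg_nonpos) (auto simp: g_def x_def y_def q_def inner_diff_left inner_diff_right)
  moreover have "?B i \<le> 0" if "i < N" for i
    using interp[where x = ws and y = "w i"] nonneg(2) that G_ws
    by (intro mult_nonneg_nonpos) (auto simp: g_def x_def y_def inner_diff_right)
  moreover have "?C \<le> 0"
    using interp[where x = "w (N - 1)" and y = ws] nonneg(3) G_ws
    by (intro mult_nonneg_nonpos) (auto simp: g_def)
  ultimately have "(\<Sum>i<N - 1. ?A i) + (\<Sum>i<N. ?B i) + ?C \<le> 0"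
    by (intro add_nonpos_nonpos sum_nonpos) auto
  moreover have "(\<Sum>i<N - 1. ?A i) = (\<Sum>i<N - 1. lamI i * (h (w (Suc i)) - h (w i))
      + lamI i * inner (g (Suc i) - g i) (x i) - lamI i * (y (Suc i) - y i) + K * (lamI i * q i))"
    by (rule sum.cong) (simp_all add: algebra_simps)
  moreover have "(\<Sum>i<N. ?B i) = (\<Sum>i<N. lamS i * h (w i) - h ws * lamS i - lamS i * y i
      + K * (lamS i * inner (g i) (g i)))"
    by (rule sum.cong) (simp_all add: algebra_simps)
  moreover have "?C = lamNs * h ws - lamNs * h (w (N - 1)) + K * (lamNs * inner (g (N - 1)) (g (N - 1)))"
    by (simp add: algebra_simps)
  moreover have "h ws * (\<Sum>i<N. lamS i) = lamNs * h ws"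
    using multiplier_balance_lamNs[OF bal N] by simp
  \<comment> \<open>the function values and the products \<open>y\<close> telescope against the equality constraint\<close>
  moreover note multiplier_balance_sum[OF bal N, of "\<lambda>i. h (w i)"] multiplier_balance_sum[OF bal N, of y]
  ultimately show ?thesis
    unfolding g_def[symmetric] x_def[symmetric] q_def[symmetric] y_def[symmetric] distrib_left
      sum.distrib sum_subtractf sum_distrib_left[symmetric]
    by linarith
qed

lemma minimaxR_feasible_scaled_iterates:
  fixes x v :: "nat \<Rightarrow> 'a::real_vector"
  assumes feas: "minimaxR_feasible N \<mu> L \<tau> lamI lamS lamNs bet" and N: "1 < N" and L: "L \<noteq> 0"
    and x0: "x 0 = v 0"
    and iterate: "\<forall>k\<in>{1..N}. x k = scaled_iterate \<mu> L 1 (alpha_coef N lamI lamNs bet k) k v"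
  shows "i < N - 1 \<Longrightarrow> lamI i *\<^sub>R x i = scaled_iterate \<mu> L (lamI i) (bet i) i v"
    and "lamNs *\<^sub>R x (N - 1) = scaled_iterate \<mu> L lamNs (bet (N - 1)) (N - 1) v"
    and "x N = scaled_iterate \<mu> L 1 (bet N) N v"
proof -
  let ?\<alpha> = "alpha_coef N lamI lamNs bet"
  show "lamI i *\<^sub>R x i = scaled_iterate \<mu> L (lamI i) (bet i) i v" if i: "i < N - 1"
  proof (cases "i = 0")
    case True
    then show ?thesis by (simp add: scaled_iterate_0 x0)
  next
    case False
    have "lamI i * ?\<alpha> i j = bet i j" if "j < i" for j
      using minimaxR_feasible_lamI_eq_0_imp_bet_eq_0[OF feas N L i _ that] False i
      by (cases "lamI i = 0") (auto simp: alpha_coef_def)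
    then show ?thesis
      using iterate[rule_format, of i] False i by (simp add: scaled_iterate_scale)
  qed
  have "lamNs * ?\<alpha> (N - 1) j = bet (N - 1) j" if "j < N - 1" for j
    using minimaxR_feasible_lamNs_eq_0_imp_bet_eq_0[OF feas N L _ that]
    by (cases "lamNs = 0") (auto simp: alpha_coef_def)
  then show "lamNs *\<^sub>R x (N - 1) = scaled_iterate \<mu> L lamNs (bet (N - 1)) (N - 1) v"
    using iterate[rule_format, of "N - 1"] N by (simp add: scaled_iterate_scale)
  have "?\<alpha> N = bet N"
    using N by (auto simp: alpha_coef_def fun_eq_iff)
  then show "x N = scaled_iterate \<mu> L 1 (bet N) N v"
    using iterate[rule_format, of N] N by simp
qed

lemma minimaxR_feasible_convergence:
  fixes f :: "'a::euclidean_space \<Rightarrow> real" and w :: "nat \<Rightarrow> 'a"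
  assumes N: "1 < N" and \<mu>: "0 \<le> \<mu>" "\<mu> < L"
    and feas: "minimaxR_feasible N \<mu> L \<tau> lamI lamS lamNs bet"
    and F: "in_F \<mu> L f gf" and min: "\<forall>x. f ws \<le> f x"
    and iter: "\<forall>k\<in>{1..N}. w k - ws =
                (1 - \<mu> / L * (\<Sum>i<k. alpha_coef N lamI lamNs bet k i)) *\<^sub>R (w 0 - ws)
                - (\<Sum>i<k. (alpha_coef N lamI lamNs bet k i / L) *\<^sub>R (gf (w i) - \<mu> *\<^sub>R (w i - ws)))"
  shows "(norm (w N - ws))\<^sup>2 \<le> \<tau> * (norm (w 0 - ws))\<^sup>2"
proof -
  note nonneg = minimaxR_feasibleD(1-3)[OF feas]
    and psd = minimaxR_feasibleD(4)[OF feas] and bal = minimaxR_feasibleD(5)[OF feas]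
  have L: "L \<noteq> 0"
    using \<mu> by simp
  define h where "h x = f x - \<mu> / 2 * (norm (x - ws))\<^sup>2" for x
  define G where "G x = gf x - \<mu> *\<^sub>R (x - ws)" for x
  define v where "v p = (if p = 0 then w 0 - ws else G (w (p - 1)))" for p
  have v: "v 0 = w 0 - ws" "v (Suc i) = G (w i)" "v N = G (w (N - 1))" for i
    using N by (simp_all add: v_def)
  have "\<forall>k\<in>{1..N}. w k - ws = scaled_iterate \<mu> L 1 (alpha_coef N lamI lamNs bet k) k v"
    using iter by (simp add: scaled_iterate_def v G_def)
  note scaled = minimaxR_feasible_scaled_iterates[where x = "\<lambda>k. w k - ws", OF feas N L v(1)[symmetric] this]
  have scaled_lamI: "lamI i *\<^sub>R (w i - ws) = scaled_iterate \<mu> L (lamI i) (bet i) i v" if "i < N - 1" for i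
    using scaled(1)[OF that] by simp
  have scaled_lamNs: "lamNs *\<^sub>R (w (N - 1) - ws) = scaled_iterate \<mu> L lamNs (bet (N - 1)) (N - 1) v"
    using scaled(2) by simp
  have last: "w N - ws = scaled_iterate \<mu> L 1 (bet N) N v"
    using scaled(3) by simp
  have G_ws: "G ws = 0"
    using in_F_minimizer_gradient[OF F _ min] \<mu> by (simp add: G_def)
  have "(norm (w N - ws))\<^sup>2 = inner (lincomb (N + 1) v (wNvec N \<mu> L bet)) (lincomb (N + 1) v (wNvec N \<mu> L bet))"
    unfolding lincomb_wNvec last by (simp add: power2_norm_eq_inner)
  also have "\<dots> \<le> gram_form (N + 1) v (Smat N \<mu> L \<tau> lamI lamS lamNs bet)"
    using psd by (rule psd_blockmat_gram_bound)
  also have "\<dots> = 1 / (2 * (L - \<mu>)) * (lamNs * inner (G (w (N - 1))) (G (w (N - 1)))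
           + (\<Sum>i<N. lamS i * inner (G (w i)) (G (w i)))
           + (\<Sum>i<N - 1. lamI i * inner (G (w i) - G (w (Suc i))) (G (w i) - G (w (Suc i)))))
         + (\<Sum>i<N - 1. lamI i * inner (G (w (Suc i)) - G (w i)) (w i - ws))
         - lamNs * inner (G (w (N - 1))) (w (N - 1) - ws) + \<tau> * (norm (w 0 - ws))\<^sup>2"
  proof -
    have "(\<Sum>i<N - 1. inner (v (Suc (Suc i)) - v (Suc i)) (scaled_iterate \<mu> L (lamI i) (bet i) i v))
        = (\<Sum>i<N - 1. lamI i * inner (G (w (Suc i)) - G (w i)) (w i - ws))"
      by (intro sum.cong) (simp_all add: v scaled_lamI[symmetric])
    then show ?thesis
      unfolding gram_form_Smat[OF N bal] scaled_lamNs[symmetric] by (simp add: v power2_norm_eq_inner)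
  qed
  also have "\<dots> \<le> \<tau> * (norm (w 0 - ws))\<^sup>2"
    using interpolation_weighted_sum_le[OF N bal nonneg in_F_shift_interpolation[OF F \<mu>(2) h_def G_def] G_ws, of w]
    by simp
  finally show ?thesis .
qed

theorem lemma6:
  fixes N :: nat and \<mu> L \<tau> lamNs :: real
    and lamI lamS :: "nat \<Rightarrow> real" and bet :: "nat \<Rightarrow> nat \<Rightarrow> real"
  assumes "N > 1" and "0 \<le> \<mu>" and "\<mu> < L"
    and opt: "minimaxR_optimal N \<mu> L \<tau> lamI lamS lamNs bet"
  shows "(\<forall>i<N - 1. lamI i = 0 \<longrightarrow> (\<forall>j<i. bet i j = 0))
       \<and> (lamNs = 0 \<longrightarrow> (\<forall>j<N - 1. bet (N - 1) j = 0))
       \<and> (\<forall>(f :: 'a::euclidean_space \<Rightarrow> real) gf (w :: nat \<Rightarrow> 'a) ws.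
            in_F \<mu> L f gf \<longrightarrow> (\<forall>x. f ws \<le> f x) \<longrightarrow>
            (\<forall>k\<in>{1..N}. w k - ws =
                (1 - \<mu> / L * (\<Sum>i<k. alpha_coef N lamI lamNs bet k i)) *\<^sub>R (w 0 - ws)
                - (\<Sum>i<k. (alpha_coef N lamI lamNs bet k i / L) *\<^sub>R
                            (gf (w i) - \<mu> *\<^sub>R (w i - ws)))) \<longrightarrow>
            (norm (w N - ws))\<^sup>2 \<le> \<tau> * (norm (w 0 - ws))\<^sup>2)"
proof -
  have feas: "minimaxR_feasible N \<mu> L \<tau> lamI lamS lamNs bet"
    using opt unfolding minimaxR_optimal_def by blast
  have L: "L \<noteq> 0"
    using assms(2,3) by simp
  show ?thesis
    using minimaxR_feasible_lamI_eq_0_imp_bet_eq_0[OF feas assms(1) L]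
      minimaxR_feasible_lamNs_eq_0_imp_bet_eq_0[OF feas assms(1) L]
      minimaxR_feasible_convergence[OF assms(1-3) feas]
    by blast
qed

end
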